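(* Let $g(v;a)=v(1-v)(v-a)$, $k>0$, $a\in(0,\frac12)$, and $A\in(a,\frac{a+1}{3})$. Then $$d^\diamond(A;a)=\frac{g'(A;a)}{k+1},$$ where $g'=\partial_v g$.
   Context: $d^\diamond(A;a)=\inf\{d>0:\ d(k+1)(A-v)-g(A;a)\ge -g(v;a)\ \text{for all }v\in[0,A]\}$. *)

theory Defs
  imports "HOL-Analysis.Analysis"
begin

definition g :: "real \<Rightarrow> real \<Rightarrow> real" where
  "g v a = v * (1 - v) * (v - a)"

definition d_diamond :: "real \<Rightarrow> real \<Rightarrow> real \<Rightarrow> real" where
  "d_diamond k A a = Inf {d. d > 0 \<and> (\<forall>v\<in>{0..A}. d * (k + 1) * (A - v) - g A a \<ge> - g v a)}"

end

theory Submission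
  imports Defs
begin

text \<open>The admissibility condition says that every chord slope (g(A) - g(v)) / (A - v), v < A,
  is at most d(k+1). Letting v tend to A shows that d(k+1) must dominate g'(A). Conversely the
  factorisation g(A) - g(v) = (A - v) (g'(A) - (A - v)(1 + a - 2A - v)), whose last factor is
  nonnegative on [0, A] because 3A < 1 + a, shows that all these slopes lie below g'(A).
  Hence the admissible d form the ray [g'(A)/(k+1), \<infinity>), which lies in (0, \<infinity>) as g'(A) > 0.\<close>

lemma has_real_derivative_left_slope_bound:
  fixes f :: "real \<Rightarrow> real"
  assumes "(f has_real_derivative f') (at A)" and "B < A"
    and "\<forall>v\<in>{B..<A}. f A - f v \<le> c * (A - v)"
  shows "f' \<le> c"
proof (rule tendsto_upperbound)
  show "((\<lambda>v. (f v - f A) / (v - A)) \<longlongrightarrow> f') (at_left A)"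
    using has_field_derivative_at_within[OF assms(1)] by (simp add: has_field_derivative_iff)
  have "\<forall>\<^sub>F v in at_left A. B < v \<and> v < A"
    unfolding eventually_at_left_field by (rule exI[of _ B]) (use assms(2) in auto)
  then show "\<forall>\<^sub>F v in at_left A. (f v - f A) / (v - A) \<le> c"
  proof (rule eventually_mono)
    fix v assume v: "B < v \<and> v < A"
    then have "f A - f v \<le> c * (A - v)" using assms(3) by simp
    with v show "(f v - f A) / (v - A) \<le> c" by (simp add: divide_le_eq algebra_simps)
  qed
qed simp

lemma g_has_real_derivative:
  "((\<lambda>v. g v a) has_real_derivative (-3 * A^2 + 2 * (1 + a) * A - a)) (at A)"
  unfolding g_def by (auto intro!: derivative_eq_intros simp: algebra_simps power2_eq_square)

lemma deriv_g: "deriv (\<lambda>v. g v a) A = -3 * A^2 + 2 * (1 + a) * A - a"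
  using g_has_real_derivative by (rule DERIV_imp_deriv)

lemma g_diff_eq:
  "g A a - g v a = (A - v) * (deriv (\<lambda>v. g v a) A - (A - v) * (1 + a - 2 * A - v))"
  unfolding deriv_g unfolding g_def by (simp add: algebra_simps power2_eq_square power3_eq_cube)

lemma deriv_g_pos:
  assumes "0 < a" and "a \<le> 1/2" and "a < A" and "3 * A < 1 + a"
  shows "deriv (\<lambda>v. g v a) A > 0"
proof -
  have "deriv (\<lambda>v. g v a) A = (A - a) * (1 + a - 3 * A) + A * (1 - 2 * a) + a^2"
    unfolding deriv_g by (simp add: algebra_simps power2_eq_square)
  moreover have "(A - a) * (1 + a - 3 * A) > 0" using assms by simp
  moreover have "A * (1 - 2 * a) \<ge> 0" using assms by simp
  moreover have "a^2 > 0" using assms(1) by simp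
  ultimately show ?thesis by linarith
qed

lemma g_slope_bound_iff:
  assumes "0 < A" and "3 * A \<le> 1 + a"
  shows "(\<forall>v\<in>{0..A}. g A a - g v a \<le> c * (A - v)) \<longleftrightarrow> deriv (\<lambda>v. g v a) A \<le> c"
proof
  assume "\<forall>v\<in>{0..A}. g A a - g v a \<le> c * (A - v)"
  then show "deriv (\<lambda>v. g v a) A \<le> c"
    using has_real_derivative_left_slope_bound[OF g_has_real_derivative assms(1)]
    by (simp add: deriv_g)
next
  assume c: "deriv (\<lambda>v. g v a) A \<le> c"
  show "\<forall>v\<in>{0..A}. g A a - g v a \<le> c * (A - v)"
  proof
    fix v assume v: "v \<in> {0..A}"
    have "(A - v) * ((A - v) * (1 + a - 2 * A - v)) \<ge> 0"
      using v assms(2) by (intro mult_nonneg_nonneg) auto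
    moreover have "g A a - g v a
        = (A - v) * deriv (\<lambda>v. g v a) A - (A - v) * ((A - v) * (1 + a - 2 * A - v))"
      by (simp only: g_diff_eq right_diff_distrib)
    ultimately have "g A a - g v a \<le> (A - v) * deriv (\<lambda>v. g v a) A" by linarith
    also have "\<dots> \<le> c * (A - v)"
      using mult_right_mono[OF c, of "A - v"] v by (simp add: mult.commute)
    finally show "g A a - g v a \<le> c * (A - v)" .
  qed
qed

theorem lemma7p2:
  fixes k a A :: real
  assumes "k > 0" and "0 < a" and "a < 1/2" and "a < A" and "A < (a + 1) / 3"
  shows "d_diamond k A a = deriv (\<lambda>v. g v a) A / (k + 1)"
proof -
  let ?D = "deriv (\<lambda>v. g v a) A / (k + 1)"
  have "k + 1 > 0" using assms(1) by simp
  have "?D > 0" using deriv_g_pos[of a A] assms by simp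
  have bound_iff: "deriv (\<lambda>v. g v a) A \<le> d * (k + 1) \<longleftrightarrow> ?D \<le> d" for d
    using \<open>k + 1 > 0\<close> by (simp add: pos_divide_le_eq)
  have "d * (k + 1) * (A - v) - g A a \<ge> - g v a \<longleftrightarrow> g A a - g v a \<le> d * (k + 1) * (A - v)"
    for d v by linarith
  then have "{d. d > 0 \<and> (\<forall>v\<in>{0..A}. d * (k + 1) * (A - v) - g A a \<ge> - g v a)}
      = {d. d > 0 \<and> deriv (\<lambda>v. g v a) A \<le> d * (k + 1)}"
    using g_slope_bound_iff[of A a] assms by simp
  also have "\<dots> = {?D..}"
    using \<open>?D > 0\<close> bound_iff by auto
  finally show ?thesis by (simp add: d_diamond_def)
qed

end
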